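(* Let $H>0$ and $R\in(0,\pi)$. For $0\le h\le H$ and $0\le\theta_0\le R$ let $u_{h,\theta_0}$ be the rotationally symmetric function on the cap $\Omega_R=\{\Psi(\theta,\phi):0\le\theta\le R\}$ given by $$u_{h,\theta_0}(\theta)=\begin{cases}h,&\theta\in[0,\theta_0],\\ \frac{h}{R-\theta_0}(R-\theta),&\theta\in(\theta_0,R],\end{cases}$$ (with $u_{h,R}\equiv h$). Then the function $(h,\theta_0)\mapsto R_1[u_{h,\theta_0}]$ on $[0,H]\times[0,R]$ attains its minimum at a unique point, namely $(H,\theta_0^* )$, where $\theta_0^*$ is the unique solution in $(0,R)$ of $$\sin\theta_0\,\big(H^2+(R-\theta_0)^2\big)=2(R-\theta_0)(\cos\theta_0-\cos R).$$ Explicitly, $R_1[u_{h,\theta_0}]=2\pi\Big[1-\cos\theta_0+\frac{(R-\theta_0)^2(\cos\theta_0-\cos R)}{(R-\theta_0)^2+h^2}\Big]$.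
   Context: Spherical coordinates $\Psi(\theta,\phi)=(\sin\theta\cos\phi,\sin\theta\sin\phi,\cos\theta)$ on $\mathbb{S}^2$. For $u$ on a domain $\Omega\subset\mathbb{S}^2$, $R_1[u]=\int_\Omega\frac{1}{1+|\nabla_{\mathbb{S}^2}u|^2}d\Omega$; for rotationally symmetric $u=u(\theta)$ on $\Omega_R$ this equals $2\pi\int_0^R\frac{\sin\theta}{1+u'(\theta)^2}d\theta$. The graphs of the $u_{h,\theta_0}$ are called radial frustum cones. *)

theory Defs
  imports "HOL-Analysis.Analysis"
begin

text \<open>Rotationally symmetric energy on the cap \<Omega>_R:
  R_1[u] = 2 pi * integral over [0,R] of sin t / (1 + u'(t)^2).
  The profile u is a real function of the polar angle; u' is taken as the
  (classical) derivative, which exists except on a null set for the profiles used.\<close>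
definition R1_rot :: "real \<Rightarrow> (real \<Rightarrow> real) \<Rightarrow> real" where
  "R1_rot R u = 2 * pi * integral {0..R} (\<lambda>t. sin t / (1 + (deriv u t)\<^sup>2))"

text \<open>Radial frustum cone profile u_{h,theta0} (extended to all real angles;
  only its values on [0,R] matter). For theta0 = R it is constantly h on [0,R].\<close>
definition frustum :: "real \<Rightarrow> real \<Rightarrow> real \<Rightarrow> real \<Rightarrow> real" where
  "frustum R h \<theta>\<^sub>0 t = (if t \<le> \<theta>\<^sub>0 then h else h / (R - \<theta>\<^sub>0) * (R - t))"

end

theory Submission
  imports Defs
begin

text \<open>On \<open>[0, \<theta>\<^sub>0]\<close> the profile is flat and on \<open>(\<theta>\<^sub>0, R]\<close> it has slope \<open>-h/(R - \<theta>\<^sub>0)\<close>, so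
  \<open>R\<^sub>1\<close> splits into two integrals of \<open>sin\<close>, the second weighted by \<open>(R - \<theta>\<^sub>0)\<^sup>2/((R - \<theta>\<^sub>0)\<^sup>2 + h\<^sup>2)\<close>;
  this is the explicit energy \<open>E\<^sub>h(\<theta>\<^sub>0) = frustum_energy R h \<theta>\<^sub>0\<close>. It decreases strictly in \<open>h\<close> whenever \<open>\<theta>\<^sub>0 < R\<close>, so
  minimizers have \<open>h = H\<close>. Further \<open>E\<^sub>H' = H\<^sup>2 \<phi> / ((R - t)\<^sup>2 + H\<^sup>2)\<^sup>2\<close> with
  \<open>\<phi>(t) = frustum_crit H R t = sin t (H\<^sup>2 + (R - t)\<^sup>2) - 2 (R - t)(cos t - cos R)\<close>, and \<open>\<phi>(t)/(R - t)\<close> is strictly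
  increasing on \<open>(0, R)\<close>: its derivative is a positive multiple of \<open>sin t + (R - t) cos t\<close>, which
  is positive because \<open>R < pi\<close>. Since \<open>\<phi>(0) < 0 < \<phi>(R)\<close>, \<open>\<phi>\<close> has exactly one zero \<open>\<theta>\<^sub>0\<^sup>*\<close>
  in \<open>(0, R)\<close>, where \<open>E\<^sub>H\<close> turns from decreasing to increasing.\<close>

lemma has_integral_sin:
  fixes a b :: real
  assumes "a \<le> b"
  shows "(sin has_integral (cos a - cos b)) {a..b}"
  using integral_sin[OF assms] integrable_continuous_interval[OF continuous_on_sin[OF continuous_on_id]]
  by (metis has_integral_integral)

lemma deriv_frustum:
  assumes "t \<noteq> \<theta>\<^sub>0"
  shows "deriv (frustum R h \<theta>\<^sub>0) t = (if t < \<theta>\<^sub>0 then 0 else - (h / (R - \<theta>\<^sub>0)))"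
proof (cases "t < \<theta>\<^sub>0")
  case True
  have "(frustum R h \<theta>\<^sub>0 has_real_derivative 0) (at t)"
    by (rule has_field_derivative_transform_within_open[where f="\<lambda>_. h" and S="{..<\<theta>\<^sub>0}"])
       (use True in \<open>auto simp: frustum_def\<close>)
  then show ?thesis using True by (simp add: DERIV_imp_deriv)
next
  case False
  then have "\<theta>\<^sub>0 < t" using assms by simp
  have "((\<lambda>s. c * (R - s)) has_real_derivative - c) (at t)" for c
    by (auto intro!: derivative_eq_intros)
  then have "(frustum R h \<theta>\<^sub>0 has_real_derivative - (h / (R - \<theta>\<^sub>0))) (at t)"
    by (rule has_field_derivative_transform_within_open[where S="{\<theta>\<^sub>0<..}"])
       (use \<open>\<theta>\<^sub>0 < t\<close> in \<open>auto simp: frustum_def\<close>)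
  then show ?thesis using False by (simp add: DERIV_imp_deriv)
qed

definition frustum_energy :: "real \<Rightarrow> real \<Rightarrow> real \<Rightarrow> real" where
  "frustum_energy R h t = 1 - cos t + (R - t)\<^sup>2 * (cos t - cos R) / ((R - t)\<^sup>2 + h\<^sup>2)"

lemma R1_rot_frustum:
  assumes "0 \<le> \<theta>\<^sub>0" "\<theta>\<^sub>0 \<le> R"
  shows "R1_rot R (frustum R h \<theta>\<^sub>0) = 2 * pi * frustum_energy R h \<theta>\<^sub>0"
proof -
  define k where "k = 1 / (1 + (h / (R - \<theta>\<^sub>0))\<^sup>2)"
  let ?f = "\<lambda>t. sin t / (1 + (deriv (frustum R h \<theta>\<^sub>0) t)\<^sup>2)"
  \<comment> \<open>\<open>deriv\<close> is a junk value at the kink \<open>\<theta>\<^sub>0\<close>, which the integral does not see.\<close>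
  have "(?f has_integral (cos 0 - cos \<theta>\<^sub>0)) {0..\<theta>\<^sub>0}"
    by (rule has_integral_spike_finite[where S="{\<theta>\<^sub>0}", OF _ _ has_integral_sin[OF assms(1)]])
       (auto simp: deriv_frustum)
  moreover have "(?f has_integral (k * (cos \<theta>\<^sub>0 - cos R))) {\<theta>\<^sub>0..R}"
    by (rule has_integral_spike_finite[where S="{\<theta>\<^sub>0}",
          OF _ _ has_integral_mult_right[OF has_integral_sin[OF assms(2)]]])
       (auto simp: deriv_frustum k_def)
  ultimately have "(?f has_integral (1 - cos \<theta>\<^sub>0 + k * (cos \<theta>\<^sub>0 - cos R))) {0..R}"
    using has_integral_combine[OF assms] by simp
  moreover have "k * (cos \<theta>\<^sub>0 - cos R) = (R - \<theta>\<^sub>0)\<^sup>2 * (cos \<theta>\<^sub>0 - cos R) / ((R - \<theta>\<^sub>0)\<^sup>2 + h\<^sup>2)"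
    by (cases "\<theta>\<^sub>0 = R") (simp_all add: k_def field_simps)
  ultimately show ?thesis
    unfolding R1_rot_def frustum_energy_def by (simp add: integral_unique)
qed

lemma frustum_energy_eq:
  assumes "(R - t)\<^sup>2 + h\<^sup>2 \<noteq> 0"
  shows "frustum_energy R h t = 1 - cos R - h\<^sup>2 * (cos t - cos R) / ((R - t)\<^sup>2 + h\<^sup>2)"
  using assms by (simp add: frustum_energy_def field_simps)

lemma frustum_energy_height_antimono:
  assumes "0 \<le> h" "h \<le> H" "0 \<le> t" "t \<le> R" "R \<le> pi"
  shows "frustum_energy R H t \<le> frustum_energy R h t"
    and "t < R \<Longrightarrow> h < H \<Longrightarrow> frustum_energy R H t < frustum_energy R h t"
proof -
  have "h\<^sup>2 \<le> H\<^sup>2" using assms by (simp add: power_mono)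
  show "frustum_energy R H t \<le> frustum_energy R h t"
  proof (cases "t = R")
    case False
    then have "cos R < cos t" using assms by (intro cos_monotone_0_pi) auto
    with False \<open>h\<^sup>2 \<le> H\<^sup>2\<close> show ?thesis
      unfolding frustum_energy_def by (auto intro!: divide_left_mono add_pos_nonneg mult_pos_pos)
  qed (simp add: frustum_energy_def)
  assume "t < R" "h < H"
  then have "cos R < cos t" using assms by (intro cos_monotone_0_pi) auto
  moreover have "h\<^sup>2 < H\<^sup>2" using assms \<open>h < H\<close> by (simp add: power_strict_mono)
  ultimately show "frustum_energy R H t < frustum_energy R h t"
    using \<open>t < R\<close> unfolding frustum_energy_def
    by (auto intro!: divide_strict_left_mono add_pos_nonneg mult_pos_pos)
qed

definition frustum_crit :: "real \<Rightarrow> real \<Rightarrow> real \<Rightarrow> real" where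
  "frustum_crit H R t = sin t * (H\<^sup>2 + (R - t)\<^sup>2) - 2 * (R - t) * (cos t - cos R)"

lemma frustum_crit_eq_0_iff:
  "frustum_crit H R t = 0 \<longleftrightarrow> sin t * (H\<^sup>2 + (R - t)\<^sup>2) = 2 * (R - t) * (cos t - cos R)"
  by (simp add: frustum_crit_def)

lemma has_real_derivative_frustum_energy:
  assumes "H > 0"
  shows "(frustum_energy R H has_real_derivative
           H\<^sup>2 * frustum_crit H R t / ((R - t)\<^sup>2 + H\<^sup>2)\<^sup>2) (at t)"
proof -
  have "(R - s)\<^sup>2 + H\<^sup>2 \<noteq> 0" for s using assms by (simp add: add_nonneg_pos)
  then have "frustum_energy R H = (\<lambda>s. 1 - cos R - H\<^sup>2 * (cos s - cos R) / ((R - s)\<^sup>2 + H\<^sup>2))"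
    using frustum_energy_eq by blast
  then show ?thesis
    unfolding frustum_crit_def using assms
    by (auto intro!: derivative_eq_intros simp flip: power2_eq_square
        simp: algebra_simps diff_divide_distrib add_divide_distrib)
qed

lemma mult_cos_less_sin:
  fixes x :: real
  assumes "0 < x" "x < pi"
  shows "x * cos x < sin x"
proof -
  have "sin 0 - 0 * cos 0 < sin x - x * cos x"
  proof (rule DERIV_pos_imp_increasing_open[OF \<open>0 < x\<close>])
    fix y :: real assume "0 < y" "y < x"
    then have "0 < y * sin y" using assms by (simp add: sin_gt_zero)
    moreover have "((\<lambda>y. sin y - y * cos y) has_real_derivative y * sin y) (at y)"
      by (auto intro!: derivative_eq_intros)
    ultimately show "\<exists>d. ((\<lambda>y. sin y - y * cos y) has_real_derivative d) (at y) \<and> 0 < d" by blast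
  qed (intro continuous_intros)
  then show ?thesis by simp
qed

lemma sin_add_mult_cos_pos:
  fixes t s :: real
  assumes "0 < t" "t < pi" "0 \<le> s" "s \<le> pi - t"
  shows "0 < sin t + s * cos t"
proof (cases "0 \<le> cos t")
  case True
  then show ?thesis using assms by (simp add: sin_gt_zero add_pos_nonneg)
next
  case False
  \<comment> \<open>The expression is affine in \<open>s\<close>; at \<open>s = pi - t\<close> it is \<open>sin x - x cos x\<close> with \<open>x = pi - t\<close>.\<close>
  have "(pi - t) * cos (pi - t) < sin (pi - t)" using assms by (intro mult_cos_less_sin) auto
  moreover have "(pi - t) * cos t \<le> s * cos t" using False assms by (intro mult_right_mono_neg) auto
  ultimately show ?thesis by simp
qed

lemma has_real_derivative_frustum_crit_div:
  assumes "t \<noteq> R"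
  shows "((\<lambda>t. frustum_crit H R t / (R - t)) has_real_derivative
           (H\<^sup>2 + (R - t)\<^sup>2) * (sin t + (R - t) * cos t) / (R - t)\<^sup>2) (at t)"
  unfolding frustum_crit_def using assms
  by (auto intro!: derivative_eq_intros simp flip: power2_eq_square simp: field_split_simps)

lemma frustum_crit_div_strict_mono:
  assumes "0 < x" "x < y" "y < R" "R \<le> pi"
  shows "frustum_crit H R x / (R - x) < frustum_crit H R y / (R - y)"
proof (rule DERIV_pos_imp_increasing[OF \<open>x < y\<close>])
  fix z assume "x \<le> z" "z \<le> y"
  then have "0 < sin z + (R - z) * cos z" using assms by (intro sin_add_mult_cos_pos) auto
  moreover have "0 < H\<^sup>2 + (R - z)\<^sup>2" "0 < (R - z)\<^sup>2" using \<open>z \<le> y\<close> assms by (auto intro: add_nonneg_pos)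
  moreover have "z \<noteq> R" using \<open>z \<le> y\<close> assms by simp
  ultimately show "\<exists>d. ((\<lambda>t. frustum_crit H R t / (R - t)) has_real_derivative d) (at z) \<and> 0 < d"
    by (blast intro: has_real_derivative_frustum_crit_div divide_pos_pos mult_pos_pos)
qed

lemma frustum_crit_sign:
  assumes "R \<le> pi" "t\<^sub>0 \<in> {0<..<R}" "frustum_crit H R t\<^sub>0 = 0" "t \<in> {0<..<R}"
  shows "t < t\<^sub>0 \<Longrightarrow> frustum_crit H R t < 0" and "t\<^sub>0 < t \<Longrightarrow> 0 < frustum_crit H R t"
proof -
  have "0 < R - t" using assms by simp
  show "t < t\<^sub>0 \<Longrightarrow> frustum_crit H R t < 0"
    using frustum_crit_div_strict_mono[of t t\<^sub>0 R H] assms \<open>0 < R - t\<close>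
    by (simp add: pos_divide_less_eq)
  show "t\<^sub>0 < t \<Longrightarrow> 0 < frustum_crit H R t"
    using frustum_crit_div_strict_mono[of t\<^sub>0 t R H] assms \<open>0 < R - t\<close>
    by (simp add: pos_less_divide_eq)
qed

lemma frustum_crit_zero_unique:
  assumes "R \<le> pi" "t\<^sub>0 \<in> {0<..<R}" "frustum_crit H R t\<^sub>0 = 0"
    "t \<in> {0<..<R}" "frustum_crit H R t = 0"
  shows "t = t\<^sub>0"
  using frustum_crit_sign[OF assms(1-4)] assms(5) by (cases t t\<^sub>0 rule: linorder_cases) auto

lemma frustum_crit_zero_exists:
  assumes "H > 0" "0 < R" "R < pi"
  obtains t\<^sub>0 where "t\<^sub>0 \<in> {0<..<R}" "frustum_crit H R t\<^sub>0 = 0"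
proof -
  have "cos R < cos 0" using assms by (intro cos_monotone_0_pi) auto
  then have neg: "frustum_crit H R 0 < 0" using assms unfolding frustum_crit_def by simp
  have pos: "0 < frustum_crit H R R" using assms unfolding frustum_crit_def by (simp add: sin_gt_zero)
  have "continuous_on {0..R} (frustum_crit H R)"
    unfolding frustum_crit_def by (intro continuous_intros)
  then obtain t\<^sub>0 where "0 \<le> t\<^sub>0" "t\<^sub>0 \<le> R" "frustum_crit H R t\<^sub>0 = 0"
    using IVT'[of "frustum_crit H R" 0 0 R] neg pos assms by auto
  moreover have "t\<^sub>0 \<noteq> 0" "t\<^sub>0 \<noteq> R" using neg pos \<open>frustum_crit H R t\<^sub>0 = 0\<close> by auto
  ultimately show ?thesis by (intro that[of t\<^sub>0]) auto
qed

lemma frustum_energy_strict_min: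
  assumes "H > 0" "R \<le> pi" "t\<^sub>0 \<in> {0<..<R}" "frustum_crit H R t\<^sub>0 = 0"
    "t \<in> {0..R}" "t \<noteq> t\<^sub>0"
  shows "frustum_energy R H t\<^sub>0 < frustum_energy R H t"
proof -
  let ?E = "frustum_energy R H" and ?E' = "\<lambda>z. H\<^sup>2 * frustum_crit H R z / ((R - z)\<^sup>2 + H\<^sup>2)\<^sup>2"
  have der: "(?E has_real_derivative ?E' z) (at z)" for z
    using has_real_derivative_frustum_energy[OF \<open>H > 0\<close>] .
  have cont: "continuous_on {a..b} ?E" for a b
    using der by (intro DERIV_atLeastAtMost_imp_continuous_on) blast
  have scale: "0 < H\<^sup>2 / ((R - z)\<^sup>2 + H\<^sup>2)\<^sup>2" for z
    using assms by (simp add: add_nonneg_pos)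
  consider "t < t\<^sub>0" | "t\<^sub>0 < t" using \<open>t \<noteq> t\<^sub>0\<close> by linarith
  then show ?thesis
  proof cases
    case 1
    show ?thesis
    proof (rule DERIV_neg_imp_decreasing_open[OF 1 _ cont])
      fix z assume "t < z" "z < t\<^sub>0"
      then have "frustum_crit H R z < 0" using frustum_crit_sign(1)[OF assms(2-4)] assms by auto
      then show "\<exists>d. (?E has_real_derivative d) (at z) \<and> d < 0"
        using der scale[of z] by (metis mult_pos_neg times_divide_eq_left)
    qed
  next
    case 2
    show ?thesis
    proof (rule DERIV_pos_imp_increasing_open[OF 2 _ cont])
      fix z assume "t\<^sub>0 < z" "z < t"
      then have "0 < frustum_crit H R z" using frustum_crit_sign(2)[OF assms(2-4)] assms by auto
      then show "\<exists>d. (?E has_real_derivative d) (at z) \<and> 0 < d"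
        using der scale[of z] by (metis mult_pos_pos times_divide_eq_left)
    qed
  qed
qed

lemma frustum_energy_unique_min:
  assumes "H > 0" "R \<le> pi" "t\<^sub>0 \<in> {0<..<R}" "frustum_crit H R t\<^sub>0 = 0"
    "h \<in> {0..H}" "t \<in> {0..R}" "(h, t) \<noteq> (H, t\<^sub>0)"
  shows "frustum_energy R H t\<^sub>0 < frustum_energy R h t"
proof (cases "t = t\<^sub>0")
  case True
  then show ?thesis using assms by (auto intro: frustum_energy_height_antimono(2))
next
  case False
  then have "frustum_energy R H t\<^sub>0 < frustum_energy R H t"
    using assms by (intro frustum_energy_strict_min) auto
  also have "\<dots> \<le> frustum_energy R h t"
    using assms by (intro frustum_energy_height_antimono(1)) auto
  finally show ?thesis .
qed

lemma minimizers_eq_singleton: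
  fixes f :: "'a \<Rightarrow> 'b :: linorder"
  assumes "p \<in> S" "\<And>q. q \<in> S \<Longrightarrow> q \<noteq> p \<Longrightarrow> f p < f q"
  shows "{x \<in> S. \<forall>q \<in> S. f x \<le> f q} = {p}"
proof (intro equalityI subsetI)
  fix x assume "x \<in> {x \<in> S. \<forall>q \<in> S. f x \<le> f q}"
  with assms show "x \<in> {p}" by (auto simp flip: not_less)
next
  fix x assume "x \<in> {p}"
  with assms show "x \<in> {x \<in> S. \<forall>q \<in> S. f x \<le> f q}" by (auto intro: less_imp_le)
qed

theorem mainTheorem4:
  fixes H R :: real
  assumes "H > 0" and "0 < R" and "R < pi"
  shows "(\<forall>h \<in> {0..H}. \<forall>\<theta>\<^sub>0 \<in> {0..R}.
            R1_rot R (frustum R h \<theta>\<^sub>0) =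
              2 * pi * (1 - cos \<theta>\<^sub>0 + (R - \<theta>\<^sub>0)\<^sup>2 * (cos \<theta>\<^sub>0 - cos R) / ((R - \<theta>\<^sub>0)\<^sup>2 + h\<^sup>2)))
       \<and> (\<exists>\<theta>s. \<theta>s \<in> {0<..<R}
              \<and> sin \<theta>s * (H\<^sup>2 + (R - \<theta>s)\<^sup>2) = 2 * (R - \<theta>s) * (cos \<theta>s - cos R)
              \<and> (\<forall>t \<in> {0<..<R}. sin t * (H\<^sup>2 + (R - t)\<^sup>2) = 2 * (R - t) * (cos t - cos R) \<longrightarrow> t = \<theta>s)
              \<and> {p \<in> {0..H} \<times> {0..R}. \<forall>q \<in> {0..H} \<times> {0..R}.
                   R1_rot R (frustum R (fst p) (snd p)) \<le> R1_rot R (frustum R (fst q) (snd q))}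
                = {(H, \<theta>s)})"
proof -
  obtain t\<^sub>0 where t\<^sub>0: "t\<^sub>0 \<in> {0<..<R}" "frustum_crit H R t\<^sub>0 = 0"
    using frustum_crit_zero_exists assms .
  have unique: "t = t\<^sub>0" if "t \<in> {0<..<R}" "frustum_crit H R t = 0" for t
    using frustum_crit_zero_unique[OF _ t\<^sub>0 that] assms by simp
  let ?J = "\<lambda>p. R1_rot R (frustum R (fst p) (snd p))"
  have "?J (H, t\<^sub>0) < ?J q" if "q \<in> {0..H} \<times> {0..R}" "q \<noteq> (H, t\<^sub>0)" for q
    using frustum_energy_unique_min[OF _ _ t\<^sub>0, of "fst q" "snd q"] that t\<^sub>0 assms
    by (auto simp: R1_rot_frustum)
  then have "{p \<in> {0..H} \<times> {0..R}. \<forall>q \<in> {0..H} \<times> {0..R}. ?J p \<le> ?J q} = {(H, t\<^sub>0)}"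
    using t\<^sub>0 assms by (intro minimizers_eq_singleton) auto
  moreover have "\<forall>h \<in> {0..H}. \<forall>\<theta>\<^sub>0 \<in> {0..R}. R1_rot R (frustum R h \<theta>\<^sub>0) = 2 * pi * frustum_energy R h \<theta>\<^sub>0"
    by (simp add: R1_rot_frustum)
  ultimately show ?thesis
    using t\<^sub>0 unique unfolding frustum_crit_eq_0_iff[symmetric] frustum_energy_def[symmetric]
    by blast
qed

end
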